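(* Let PS1 and PS2 be pure strategies (as in the context) with $m_{PS1}$ finite, and suppose PS2 is equivalent to PS1, i.e. $\Delta_{PS1}(X)=\Delta_{PS2}(X)$ for every $X\in\mathcal{S}_{\mathrm{non}}$. Then for any mixed strategy MS derived from PS1 and PS2, $m_{MS}(X)=m_{PS1}(X)$ for every initial population $X$.
   Context: A fitness function $f$ on a finite set is to be maximised. A metaheuristic generates populations $\Phi_0,\Phi_1,\dots$. Let $\mathcal{S}$ be the finite set of all populations, $\mathcal{S}_{\mathrm{opt}}$ those containing at least one optimal solution, $\mathcal{S}_{\mathrm{non}}=\mathcal{S}\setminus\mathcal{S}_{\mathrm{opt}}$. The sequence is a time-homogeneous Markov chain on $\mathcal{S}$ with transition probabilities $P(X,Y)=\Pr(\Phi_{t+1}=Y\mid\Phi_t=X)$, every state of $\mathcal{S}_{\mathrm{opt}}$ absorbing. The expected hitting time $m(X)\in[0,\infty]$ is the expected number of generations until first entering $\mathcal{S}_{\mathrm{opt}}$ from $\Phi_0=X$ ($m(X)=0$ on $\mathcal{S}_{\mathrm{opt}}$). A pure strategy is such a time-independent transition matrix. PS1, PS2 are pure strategies with transition matrices $P_1,P_2$ on the same $\mathcal{S}$ (with $\mathcal{S}_{\mathrm{opt}}$ absorbing), expected hitting times $m_{PS1},m_{PS2}$. A mixed strategy MS derived from PS1 and PS2 assigns to each $X\in\mathcal{S}$ probabilities $P_X(PS1)\in[0,1]$, $P_X(PS2)=1-P_X(PS1)$, and has transition matrix $P_{MS}(X,Y)=P_X(PS1)P_1(X,Y)+P_X(PS2)P_2(X,Y)$,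 with expected hitting time $m_{MS}$. With $d(X)=m_{PS1}(X)$, for $X\in\mathcal{S}_{\mathrm{non}}$: $\Delta_{PS1}(X)=d(X)-\sum_{Y\in\mathcal{S}_{\mathrm{non}}}P_1(X,Y)d(Y)$, $\Delta_{PS2}(X)=d(X)-\sum_{Y\in\mathcal{S}_{\mathrm{non}}}P_2(X,Y)d(Y)$. *)

theory Defs
  imports "HOL-Analysis.Analysis"
begin

definition pure_strategy :: "'a set \<Rightarrow> 'a set \<Rightarrow> ('a \<Rightarrow> 'a \<Rightarrow> real) \<Rightarrow> bool" where
  "pure_strategy S Sopt P \<longleftrightarrow>
     finite S \<and> Sopt \<subseteq> S \<and>
     (\<forall>X\<in>S. \<forall>Y\<in>S. 0 \<le> P X Y) \<and>
     (\<forall>X\<in>S. (\<Sum>Y\<in>S. P X Y) = 1) \<and>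
     (\<forall>X\<in>Sopt. P X X = 1)"

text \<open>stay_prob S Sopt P n X = Pr(Phi_0, ..., Phi_n all lie outside Sopt | Phi_0 = X),
  i.e. Pr(T > n) where T is the first hitting time of Sopt.\<close>
fun stay_prob :: "'a set \<Rightarrow> 'a set \<Rightarrow> ('a \<Rightarrow> 'a \<Rightarrow> real) \<Rightarrow> nat \<Rightarrow> 'a \<Rightarrow> real" where
  "stay_prob S Sopt P 0 X = (if X \<in> Sopt then 0 else 1)"
| "stay_prob S Sopt P (Suc n) X =
     (if X \<in> Sopt then 0 else (\<Sum>Y\<in>S. P X Y * stay_prob S Sopt P n Y))"

text \<open>Expected hitting time E[T] = sum_{n>=0} Pr(T > n), valued in [0, \<infinity>].\<close>
definition hitting_time :: "'a set \<Rightarrow> 'a set \<Rightarrow> ('a \<Rightarrow> 'a \<Rightarrow> real) \<Rightarrow> 'a \<Rightarrow> ennreal" where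
  "hitting_time S Sopt P X = (\<Sum>n. ennreal (stay_prob S Sopt P n X))"

definition mixed_matrix :: "('a \<Rightarrow> real) \<Rightarrow> ('a \<Rightarrow> 'a \<Rightarrow> real) \<Rightarrow> ('a \<Rightarrow> 'a \<Rightarrow> real) \<Rightarrow> 'a \<Rightarrow> 'a \<Rightarrow> real" where
  "mixed_matrix q P1 P2 X Y = q X * P1 X Y + (1 - q X) * P2 X Y"

definition drift :: "'a set \<Rightarrow> 'a set \<Rightarrow> ('a \<Rightarrow> 'a \<Rightarrow> real) \<Rightarrow> ('a \<Rightarrow> real) \<Rightarrow> 'a \<Rightarrow> real" where
  "drift S Sopt P d X = d X - (\<Sum>Y\<in>S - Sopt. P X Y * d Y)"

end

theory Submission
  imports Defs
begin

text \<open>The expected hitting time d = m_PS1 of PS1 has drift exactly 1 under PS1, so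
  the equivalence hypothesis says it has drift 1 under PS2 as well.  The drift is affine in
  the transition matrix, hence d also has drift 1 under any mixture MS.  Finally, a
  nonnegative function vanishing on the optimal states with drift 1 under a strategy is the
  expected hitting time of that strategy: unfolding the drift equation n times gives
  d(X) = \<Sum>k<n. Pr(T > k) + E[d(\<Phi>_n); T > n], and the remainder is at most
  max d \<cdot> Pr(T > n), which tends to 0 because the partial sums are bounded by d(X).\<close>

lemma stay_prob_nonneg:
  assumes "\<forall>X\<in>S. \<forall>Y\<in>S. 0 \<le> P X Y" and "X \<in> S"
  shows "0 \<le> stay_prob S Sopt P n X"
  using assms(2) by (induction n arbitrary: X) (auto simp: assms(1) intro!: sum_nonneg)

lemma stay_prob_opt: "X \<in> Sopt \<Longrightarrow> stay_prob S Sopt P n X = 0"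
  by (cases n) auto

lemma hitting_time_opt: "X \<in> Sopt \<Longrightarrow> hitting_time S Sopt P X = 0"
  by (simp add: hitting_time_def stay_prob_opt)

lemma summable_stay_prob:
  assumes "\<forall>X\<in>S. \<forall>Y\<in>S. 0 \<le> P X Y" and "X \<in> S" and "hitting_time S Sopt P X \<noteq> \<infinity>"
  shows "summable (\<lambda>n. stay_prob S Sopt P n X)"
  using assms stay_prob_nonneg[OF assms(1,2)]
  by (intro summable_suminf_not_top) (auto simp: hitting_time_def)

lemma enn2real_hitting_time:
  assumes "\<forall>X\<in>S. \<forall>Y\<in>S. 0 \<le> P X Y" and "X \<in> S" and "hitting_time S Sopt P X \<noteq> \<infinity>"
  shows "enn2real (hitting_time S Sopt P X) = (\<Sum>n. stay_prob S Sopt P n X)"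
  using assms stay_prob_nonneg[OF assms(1,2)] summable_stay_prob[OF assms]
  by (simp add: hitting_time_def suminf_ennreal2 suminf_nonneg)

lemma drift_eq_if_vanishes_on_opt:
  assumes "finite S" and "\<forall>Y\<in>Sopt. d Y = 0"
  shows "drift S Sopt P d X = d X - (\<Sum>Y\<in>S. P X Y * d Y)"
  unfolding drift_def using assms by (auto intro!: sum.mono_neutral_left)

lemma drift_mixed_matrix:
  "drift S Sopt (mixed_matrix q P1 P2) d X =
     q X * drift S Sopt P1 d X + (1 - q X) * drift S Sopt P2 d X"
proof -
  have "(\<Sum>Y\<in>S - Sopt. mixed_matrix q P1 P2 X Y * d Y) =
          (\<Sum>Y\<in>S - Sopt. q X * (P1 X Y * d Y) + (1 - q X) * (P2 X Y * d Y))"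
    by (intro sum.cong) (simp_all add: mixed_matrix_def algebra_simps)
  also have "\<dots> = q X * (\<Sum>Y\<in>S - Sopt. P1 X Y * d Y) + (1 - q X) * (\<Sum>Y\<in>S - Sopt. P2 X Y * d Y)"
    by (simp add: sum.distrib sum_distrib_left)
  finally show ?thesis
    by (simp add: drift_def algebra_simps)
qed

lemma drift_hitting_time:
  assumes "finite S" and P: "\<forall>X\<in>S. \<forall>Y\<in>S. 0 \<le> P X Y"
    and fin: "\<forall>Y\<in>S. hitting_time S Sopt P Y \<noteq> \<infinity>" and X: "X \<in> S - Sopt"
  shows "drift S Sopt P (\<lambda>Y. enn2real (hitting_time S Sopt P Y)) X = 1"
proof -
  let ?s = "\<lambda>Y n. stay_prob S Sopt P n Y"
  define d where "d Y = enn2real (hitting_time S Sopt P Y)" for Y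
  have d_eq: "d Y = (\<Sum>n. ?s Y n)" if "Y \<in> S" for Y
    using enn2real_hitting_time[OF P that] fin that by (simp add: d_def)
  have summable: "summable (?s Y)" if "Y \<in> S" for Y
    using summable_stay_prob[OF P that] fin that by simp
  have "d X = ?s X 0 + (\<Sum>n. ?s X (Suc n))"
    using suminf_split_head[OF summable[of X]] X d_eq[of X] by (simp del: stay_prob.simps)
  also have "(\<Sum>n. ?s X (Suc n)) = (\<Sum>n. \<Sum>Y\<in>S. P X Y * ?s Y n)"
    using X by simp
  also have "\<dots> = (\<Sum>Y\<in>S. \<Sum>n. P X Y * ?s Y n)"
    using summable by (intro suminf_sum summable_mult) simp
  also have "\<dots> = (\<Sum>Y\<in>S. P X Y * d Y)"
    using summable d_eq by (intro sum.cong refl) (simp add: suminf_mult)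
  finally have "d X = ?s X 0 + (\<Sum>Y\<in>S. P X Y * d Y)" .
  then have "d X = 1 + (\<Sum>Y\<in>S. P X Y * d Y)"
    using X by simp
  moreover have "\<forall>Y\<in>Sopt. d Y = 0"
    by (simp add: d_def hitting_time_opt)
  ultimately show ?thesis
    using drift_eq_if_vanishes_on_opt[OF \<open>finite S\<close>] by (simp add: d_def)
qed

text \<open>The expectation E[D(\<Phi>_n); T > n] of D at time n on the event that Sopt has not
  been hit yet.\<close>
fun stay_expectation ::
  "'a set \<Rightarrow> 'a set \<Rightarrow> ('a \<Rightarrow> 'a \<Rightarrow> real) \<Rightarrow> ('a \<Rightarrow> real) \<Rightarrow> nat \<Rightarrow> 'a \<Rightarrow> real" where
  "stay_expectation S Sopt P D 0 X = (if X \<in> Sopt then 0 else D X)"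
| "stay_expectation S Sopt P D (Suc n) X =
     (if X \<in> Sopt then 0 else (\<Sum>Y\<in>S. P X Y * stay_expectation S Sopt P D n Y))"

lemma stay_expectation_bounds:
  assumes P: "\<forall>X\<in>S. \<forall>Y\<in>S. 0 \<le> P X Y" and D: "\<forall>X\<in>S. 0 \<le> D X \<and> D X \<le> M"
    and "X \<in> S"
  shows "0 \<le> stay_expectation S Sopt P D n X \<and>
         stay_expectation S Sopt P D n X \<le> M * stay_prob S Sopt P n X"
  using \<open>X \<in> S\<close>
proof (induction n arbitrary: X)
  case 0
  then show ?case using D by auto
next
  case (Suc n)
  have "(\<Sum>Y\<in>S. P X Y * stay_expectation S Sopt P D n Y)
          \<le> (\<Sum>Y\<in>S. P X Y * (M * stay_prob S Sopt P n Y))"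
    using Suc.IH P Suc.prems by (auto intro!: sum_mono mult_left_mono)
  also have "\<dots> = M * (\<Sum>Y\<in>S. P X Y * stay_prob S Sopt P n Y)"
    by (simp add: sum_distrib_left algebra_simps)
  finally show ?case
    using Suc.IH P Suc.prems by (auto intro!: sum_nonneg)
qed

lemma unfold_fixpoint:
  assumes D_opt: "\<forall>X\<in>Sopt. D X = 0"
    and D_fix: "\<forall>X\<in>S - Sopt. D X = 1 + (\<Sum>Y\<in>S. P X Y * D Y)" and "X \<in> S"
  shows "D X = (\<Sum>k<n. stay_prob S Sopt P k X) + stay_expectation S Sopt P D n X"
  using \<open>X \<in> S\<close>
proof (induction n arbitrary: X)
  case 0
  then show ?case using D_opt by auto
next
  case (Suc n)
  show ?case
  proof (cases "X \<in> Sopt")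
    case True
    then show ?thesis using D_opt by (simp add: stay_prob_opt)
  next
    case False
    have "(\<Sum>k<Suc n. stay_prob S Sopt P k X) + stay_expectation S Sopt P D (Suc n) X
      = 1 + (\<Sum>k<n. \<Sum>Y\<in>S. P X Y * stay_prob S Sopt P k Y)
          + (\<Sum>Y\<in>S. P X Y * stay_expectation S Sopt P D n Y)"
      using False by (simp only: sum.lessThan_Suc_shift) simp
    also have "\<dots> = 1 + (\<Sum>Y\<in>S. P X Y *
        ((\<Sum>k<n. stay_prob S Sopt P k Y) + stay_expectation S Sopt P D n Y))"
      by (simp add: sum.swap[of _ "{..<n}"] sum_distrib_left distrib_left sum.distrib)
    also have "\<dots> = 1 + (\<Sum>Y\<in>S. P X Y * D Y)"
      using Suc.IH by (auto intro!: sum.cong)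
    also have "\<dots> = D X"
      using D_fix Suc.prems False by auto
    finally show ?thesis by simp
  qed
qed

lemma hitting_time_eq_if_drift_one:
  assumes "finite S" and P: "\<forall>X\<in>S. \<forall>Y\<in>S. 0 \<le> P X Y"
    and D_nonneg: "\<forall>X\<in>S. 0 \<le> D X" and D_opt: "\<forall>X\<in>Sopt. D X = 0"
    and drift: "\<forall>X\<in>S - Sopt. drift S Sopt P D X = 1" and X: "X \<in> S"
  shows "hitting_time S Sopt P X = ennreal (D X)"
proof -
  let ?s = "\<lambda>n. stay_prob S Sopt P n X"
  let ?r = "\<lambda>n. stay_expectation S Sopt P D n X"
  define M where "M = Max (D ` S)"
  have D_bounds: "\<forall>Y\<in>S. 0 \<le> D Y \<and> D Y \<le> M"
    using D_nonneg \<open>finite S\<close> by (auto simp: M_def)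
  have s_nonneg: "0 \<le> ?s n" for n
    using stay_prob_nonneg[OF P X] .
  have unfolded: "D X = (\<Sum>k<n. ?s k) + ?r n" for n
    using drift drift_eq_if_vanishes_on_opt[OF \<open>finite S\<close> D_opt]
    by (intro unfold_fixpoint[OF D_opt _ X]) (simp add: algebra_simps)
  have r_bounds: "0 \<le> ?r n \<and> ?r n \<le> M * ?s n" for n
    using stay_expectation_bounds[OF P D_bounds X] .
  have summable: "summable ?s"
  proof (rule summableI_nonneg_bounded[where x = "D X"])
    show "(\<Sum>k<n. ?s k) \<le> D X" for n
      using unfolded[of n] r_bounds[of n] by linarith
  qed (rule s_nonneg)
  have "(\<lambda>n. M * ?s n) \<longlonglongrightarrow> 0"
    using tendsto_mult_right_zero[OF summable_LIMSEQ_zero[OF summable]] .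
  then have "?r \<longlonglongrightarrow> 0"
    using r_bounds by (intro tendsto_sandwich[of "\<lambda>_. 0" ?r _ "\<lambda>n. M * ?s n"]) auto
  then have "(\<lambda>n. D X - ?r n) \<longlonglongrightarrow> D X"
    using tendsto_diff[of "\<lambda>_. D X" "D X" _ ?r 0] by simp
  moreover have "(\<Sum>k<n. ?s k) = D X - ?r n" for n
    using unfolded[of n] by linarith
  ultimately have "?s sums D X"
    by (simp add: sums_def)
  then show ?thesis
    by (simp add: hitting_time_def suminf_ennreal2[OF s_nonneg summable] sums_unique[symmetric])
qed

theorem lemma2:
  fixes S Sopt :: "'a set" and P1 P2 :: "'a \<Rightarrow> 'a \<Rightarrow> real" and q :: "'a \<Rightarrow> real"
  assumes ps1: "pure_strategy S Sopt P1"
    and ps2: "pure_strategy S Sopt P2"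
    and fin: "\<forall>X\<in>S. hitting_time S Sopt P1 X \<noteq> \<infinity>"
    and equiv: "\<forall>X\<in>S - Sopt.
        drift S Sopt P1 (\<lambda>Y. enn2real (hitting_time S Sopt P1 Y)) X =
        drift S Sopt P2 (\<lambda>Y. enn2real (hitting_time S Sopt P1 Y)) X"
    and q: "\<forall>X\<in>S. 0 \<le> q X \<and> q X \<le> 1"
  shows "\<forall>X\<in>S. hitting_time S Sopt (mixed_matrix q P1 P2) X = hitting_time S Sopt P1 X"
proof
  fix X assume X: "X \<in> S"
  define d where "d = (\<lambda>Y. enn2real (hitting_time S Sopt P1 Y))"
  have "finite S" and P1: "\<forall>X\<in>S. \<forall>Y\<in>S. 0 \<le> P1 X Y" and P2: "\<forall>X\<in>S. \<forall>Y\<in>S. 0 \<le> P2 X Y"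
    using ps1 ps2 by (auto simp: pure_strategy_def)
  have "\<forall>Y\<in>S - Sopt. drift S Sopt P1 d Y = 1"
    using drift_hitting_time[OF \<open>finite S\<close> P1 fin] by (simp add: d_def)
  then have "\<forall>Y\<in>S - Sopt. drift S Sopt (mixed_matrix q P1 P2) d Y = 1"
    using equiv by (simp add: drift_mixed_matrix d_def algebra_simps)
  moreover have "\<forall>X\<in>S. \<forall>Y\<in>S. 0 \<le> mixed_matrix q P1 P2 X Y"
    using q P1 P2 by (simp add: mixed_matrix_def)
  ultimately have "hitting_time S Sopt (mixed_matrix q P1 P2) X = ennreal (d X)"
    by (intro hitting_time_eq_if_drift_one[OF \<open>finite S\<close>])
       (auto simp: d_def hitting_time_opt X)
  then show "hitting_time S Sopt (mixed_matrix q P1 P2) X = hitting_time S Sopt P1 X"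
    using fin X by (simp add: d_def ennreal_enn2real_if)
qed

end
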